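(* For every horizon $T\ge 1$ and every number of actions $A\ge 2$ there exists a deterministic MDP with $A$ actions and horizon $T$ such that, with $Q^1=Q^{\pi^{\mathrm{rand}}}$ and $Q^{i+1}=\mathrm{QVI}(Q^i)$, for every $i\in\{1,\dots,T-1\}$ no policy in $\Pi(Q^i)$ is optimal.
   Context: Deterministic finite-horizon MDP $\mathcal M=(\mathcal S,\mathcal A,T,s_1,f,R)$ as usual: finite states and actions ($A=|\mathcal A|$), fixed start state $s_1$, transitions $s_{t+1}=f(s_t,a_t)$, rewards $R(s_t,a_t)$, steps $t\in[T]=\{1,\dots,T\}$, no discounting. A policy $\pi=(\pi_1,\dots,\pi_T)$ has $\pi_t:\mathcal S\to\Delta(\mathcal A)$; for deterministic $\pi_t$ write $\pi_t(s)$ for its action. $Q^\pi_t(s,a)=\mathbb E_\pi[\sum_{t'=t}^T R(s_{t'},a_{t'})\mid s_t=s,a_t=a]$. $J(\pi)=\mathbb E_\pi[\sum_{t=1}^TR(s_t,a_t)]$, and $\pi$ is optimal if $J(\pi)=\max_{\pi'}J(\pi')$. The uniformly random policy is $\pi^{\mathrm{rand}}_t(a\mid s)=1/A$. For a time-indexed function $Q=(Q_t)_{t\in[T]}$, $Q_t:\mathcal S\times\mathcal A\to\mathbb R$, Q-value iteration gives $Q'=\mathrm{QVI}(Q)$ with $Q'_t(s,a)=R(s,a)+\max_{a'\in\mathcal A}Q_{t+1}(f(s,a),a')$ for $t<T$ and $Q'_T(s,a)=R(s,a)$. $\Pi(Q)$ denotes the set of deterministic policies $\pi$ with $\pi_t(s)\in\arg\max_{a\in\mathcal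 A}Q_t(s,a)$ for all $s\in\mathcal S$, $t\in[T]$. *)

theory Defs
  imports Complex_Main
begin

text \<open>Deterministic finite-horizon MDP, represented with explicit carriers:
  states are natural numbers in a finite set S, actions are the numbers 0..<A,
  transitions f :: state => action => state, rewards R :: state => action => real,
  steps t in {1..T}. A (stochastic, time-dependent) policy pi is given by
  pi t s a = probability of action a in state s at step t.\<close>

definition valid_mdp :: "nat \<Rightarrow> nat set \<Rightarrow> nat \<Rightarrow> (nat \<Rightarrow> nat \<Rightarrow> nat) \<Rightarrow> bool" where
  "valid_mdp A S s1 f \<longleftrightarrow> finite S \<and> s1 \<in> S \<and> (\<forall>s\<in>S. \<forall>a<A. f s a \<in> S)"

definition is_policy :: "nat \<Rightarrow> nat \<Rightarrow> nat set \<Rightarrow> (nat \<Rightarrow> nat \<Rightarrow> nat \<Rightarrow> real) \<Rightarrow> bool" where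
  "is_policy A T S pol \<longleftrightarrow>
     (\<forall>t\<in>{1..T}. \<forall>s\<in>S. (\<forall>a<A. 0 \<le> pol t s a) \<and> (\<Sum>a<A. pol t s a) = 1)"

text \<open>Expected reward-to-go with k steps remaining (i.e. starting at step T - k + 1):
  Vrem k s = V^pi_{T-k+1}(s), Vrem 0 = 0.\<close>
fun Vrem :: "nat \<Rightarrow> nat \<Rightarrow> (nat \<Rightarrow> nat \<Rightarrow> nat) \<Rightarrow> (nat \<Rightarrow> nat \<Rightarrow> real)
              \<Rightarrow> (nat \<Rightarrow> nat \<Rightarrow> nat \<Rightarrow> real) \<Rightarrow> nat \<Rightarrow> nat \<Rightarrow> real" where
  "Vrem A T f R pol 0 s = 0"
| "Vrem A T f R pol (Suc k) s =
     (\<Sum>a<A. pol (T - k) s a * (R s a + Vrem A T f R pol k (f s a)))"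

definition Qpol :: "nat \<Rightarrow> nat \<Rightarrow> (nat \<Rightarrow> nat \<Rightarrow> nat) \<Rightarrow> (nat \<Rightarrow> nat \<Rightarrow> real)
              \<Rightarrow> (nat \<Rightarrow> nat \<Rightarrow> nat \<Rightarrow> real) \<Rightarrow> nat \<Rightarrow> nat \<Rightarrow> nat \<Rightarrow> real" where
  "Qpol A T f R pol t s a = R s a + Vrem A T f R pol (T - t) (f s a)"

definition Jval :: "nat \<Rightarrow> nat \<Rightarrow> nat \<Rightarrow> (nat \<Rightarrow> nat \<Rightarrow> nat) \<Rightarrow> (nat \<Rightarrow> nat \<Rightarrow> real)
              \<Rightarrow> (nat \<Rightarrow> nat \<Rightarrow> nat \<Rightarrow> real) \<Rightarrow> real" where
  "Jval A T s1 f R pol = Vrem A T f R pol T s1"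

definition optimal :: "nat \<Rightarrow> nat \<Rightarrow> nat set \<Rightarrow> nat \<Rightarrow> (nat \<Rightarrow> nat \<Rightarrow> nat) \<Rightarrow> (nat \<Rightarrow> nat \<Rightarrow> real)
              \<Rightarrow> (nat \<Rightarrow> nat \<Rightarrow> nat \<Rightarrow> real) \<Rightarrow> bool" where
  "optimal A T S s1 f R pol \<longleftrightarrow> is_policy A T S pol \<and>
     (\<forall>pol'. is_policy A T S pol' \<longrightarrow> Jval A T s1 f R pol' \<le> Jval A T s1 f R pol)"

definition rand_policy :: "nat \<Rightarrow> nat \<Rightarrow> nat \<Rightarrow> nat \<Rightarrow> real" where
  "rand_policy A t s a = 1 / real A"

definition det_policy :: "(nat \<Rightarrow> nat \<Rightarrow> nat) \<Rightarrow> nat \<Rightarrow> nat \<Rightarrow> nat \<Rightarrow> real" where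
  "det_policy pol t s a = (if a = pol t s then 1 else 0)"

definition QVI :: "nat \<Rightarrow> nat \<Rightarrow> (nat \<Rightarrow> nat \<Rightarrow> nat) \<Rightarrow> (nat \<Rightarrow> nat \<Rightarrow> real)
              \<Rightarrow> (nat \<Rightarrow> nat \<Rightarrow> nat \<Rightarrow> real) \<Rightarrow> nat \<Rightarrow> nat \<Rightarrow> nat \<Rightarrow> real" where
  "QVI A T f R Q = (\<lambda>t s a. if t < T
       then R s a + Max ((\<lambda>a'. Q (Suc t) (f s a) a') ` {..<A})
       else R s a)"

definition greedy :: "nat \<Rightarrow> nat \<Rightarrow> nat set \<Rightarrow> (nat \<Rightarrow> nat \<Rightarrow> nat \<Rightarrow> real)
              \<Rightarrow> (nat \<Rightarrow> nat \<Rightarrow> nat) \<Rightarrow> bool" where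
  "greedy A T S Q pol \<longleftrightarrow>
     (\<forall>t\<in>{1..T}. \<forall>s\<in>S. pol t s < A \<and> (\<forall>a<A. Q t s a \<le> Q t s (pol t s)))"

definition Qiter :: "nat \<Rightarrow> nat \<Rightarrow> (nat \<Rightarrow> nat \<Rightarrow> nat) \<Rightarrow> (nat \<Rightarrow> nat \<Rightarrow> real)
              \<Rightarrow> nat \<Rightarrow> nat \<Rightarrow> nat \<Rightarrow> nat \<Rightarrow> real" where
  "Qiter A T f R i = (QVI A T f R ^^ (i - 1)) (Qpol A T f R (rand_policy A))"

end

theory Submission
  imports Defs
begin

text \<open>From the start state, action 0 collects a bait reward of T - 5/4 and moves to a dead
  state, while every other action moves to a state where action 0 pays 1 per step, worth T - 1
  in total. After i - 1 rounds of value iteration starting from Q of the random policy, the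
  value of the second state credits its first i - 1 steps with the best reward 1 but the
  remaining T - i steps only with the average reward 1/A \<le> 1/2. For i \<le> T - 1 this gives
  (i - 1) + (T - i)/2 < T - 5/4, so every greedy policy takes the bait.\<close>

lemma Vrem_det_policy_Suc:
  assumes "p (T - k) s < A"
  shows "Vrem A T f R (det_policy p) (Suc k) s
           = R s (p (T - k) s) + Vrem A T f R (det_policy p) k (f s (p (T - k) s))"
proof -
  have "Vrem A T f R (det_policy p) (Suc k) s
          = (\<Sum>a<A. if a = p (T - k) s then R s a + Vrem A T f R (det_policy p) k (f s a) else 0)"
    unfolding Vrem.simps by (intro sum.cong) (auto simp: det_policy_def)
  then show ?thesis
    using assms by simp
qed

lemma Vrem_absorbing_zero_reward:
  assumes "\<And>a. f s a = s" and "\<And>a. a < A \<Longrightarrow> R s a = 0"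
  shows "Vrem A T f R pol k s = 0"
  by (induction k) (simp_all add: assms)

lemma Vrem_det_policy_absorbing:
  assumes "b < A" and "f s b = s" and "\<And>t. p t s = b"
  shows "Vrem A T f R (det_policy p) k s = real k * R s b"
  by (induction k) (simp_all add: Vrem_det_policy_Suc assms algebra_simps del: Vrem.simps(2))

lemma Vrem_rand_policy_absorbing:
  assumes "A > 0" and "\<And>a. f s a = s"
  shows "Vrem A T f R (rand_policy A) k s = real k * ((\<Sum>a<A. R s a) / real A)"
proof (induction k)
  case 0
  then show ?case by simp
next
  case (Suc k)
  have "Vrem A T f R (rand_policy A) (Suc k) s
          = (\<Sum>a<A. R s a / real A + real k * ((\<Sum>a<A. R s a) / real A) / real A)"
    by (simp add: Suc.IH assms(2) rand_policy_def add_divide_distrib)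
  also have "\<dots> = (\<Sum>a<A. R s a) / real A + real A * (real k * ((\<Sum>a<A. R s a) / real A) / real A)"
    by (simp add: sum.distrib sum_divide_distrib)
  also have "\<dots> = real (Suc k) * ((\<Sum>a<A. R s a) / real A)"
    using assms(1) by (simp add: algebra_simps add_divide_distrib)
  finally show ?case .
qed

text \<open>The value of an absorbing state s with T - t steps to go, as seen by the i-th iterate:
  i - 1 steps are credited with the best reward, the remaining ones with the average reward.\<close>
definition absorbed_value :: "nat \<Rightarrow> nat \<Rightarrow> (nat \<Rightarrow> nat \<Rightarrow> real) \<Rightarrow> nat \<Rightarrow> nat \<Rightarrow> nat \<Rightarrow> real" where
  "absorbed_value A T R i t s =
     real (min (i - 1) (T - t)) * Max (R s ` {..<A})
     + real (T - t - min (i - 1) (T - t)) * ((\<Sum>a<A. R s a) / real A)"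

lemma absorbed_value_Suc:
  assumes "1 \<le> i" and "t < T"
  shows "Max (R s ` {..<A}) + absorbed_value A T R i (Suc t) s = absorbed_value A T R (Suc i) t s"
proof -
  have "min i (T - t) = Suc (min (i - 1) (T - Suc t))"
    and "T - t - min i (T - t) = T - Suc t - min (i - 1) (T - Suc t)"
    using assms by auto
  then show ?thesis
    by (simp add: absorbed_value_def algebra_simps)
qed

lemma Qiter_Suc: "1 \<le> i \<Longrightarrow> Qiter A T f R (Suc i) = QVI A T f R (Qiter A T f R i)"
  by (cases i) (simp_all add: Qiter_def)

lemma Qiter_into_absorbing:
  assumes "A > 0" and "1 \<le> i" and absorbing: "\<And>a. f s' a = s'" and "f s a = s'"
  shows "Qiter A T f R i t s a = R s a + absorbed_value A T R i t s'"
  using assms(2,4)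
proof (induction i arbitrary: t s a rule: dec_induct)
  case base
  then show ?case
    by (simp add: Qiter_def Qpol_def Vrem_rand_policy_absorbing assms(1) absorbing absorbed_value_def)
next
  case (step i)
  show ?case
  proof (cases "t < T")
    case True
    have "Qiter A T f R (Suc i) t s a
            = R s a + Max ((\<lambda>a'. R s' a' + absorbed_value A T R i (Suc t) s') ` {..<A})"
      using True step by (simp add: Qiter_Suc QVI_def absorbing)
    also have "\<dots> = R s a + absorbed_value A T R (Suc i) t s'"
      using assms(1) True step.hyps
      by (simp add: Max_add_commute lessThan_empty_iff absorbed_value_Suc[symmetric])
    finally show ?thesis .
  next
    case False
    then show ?thesis
      using step.hyps by (simp add: Qiter_Suc QVI_def absorbed_value_def)
  qed
qed

definition lure_next :: "nat \<Rightarrow> nat \<Rightarrow> nat" where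
  "lure_next s a = (if s = 0 then if a = 0 then 1 else 2 else s)"

definition lure_reward :: "nat \<Rightarrow> nat \<Rightarrow> nat \<Rightarrow> real" where
  "lure_reward T s a = (if s = 0 \<and> a = 0 then real T - 5/4 else if s = 2 \<and> a = 0 then 1 else 0)"

lemma lure_Qiter_bait:
  assumes "A > 0" and "1 \<le> i"
  shows "Qiter A T lure_next (lure_reward T) i 1 0 0 = real T - 5/4"
proof -
  have "Max (lure_reward T 1 ` {..<A}) = 0"
    using assms(1) by (simp add: lure_reward_def lessThan_empty_iff)
  then show ?thesis
    using Qiter_into_absorbing[OF assms, of lure_next 1 0 0]
    by (simp add: lure_next_def absorbed_value_def) (simp add: lure_reward_def)
qed

lemma lure_Qiter_escape:
  assumes "A > 0" and "1 \<le> i" and "i \<le> T - 1" and "a \<noteq> 0"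
  shows "Qiter A T lure_next (lure_reward T) i 1 0 a = real i - 1 + real (T - i) / real A"
proof -
  have "Max (lure_reward T 2 ` {..<A}) = 1"
    using assms(1) by (intro Max_eqI) (auto simp: lure_reward_def image_iff)
  moreover have "(\<Sum>b<A. lure_reward T 2 b) = 1"
    using assms(1) by (simp add: lure_reward_def)
  moreover have "min (i - 1) (T - 1) = i - 1" and "T - 1 - (i - 1) = T - i"
    using assms(2,3) by auto
  ultimately show ?thesis
    using Qiter_into_absorbing[OF assms(1,2), of lure_next 2 0 a] assms(2,4)
    by (simp add: lure_next_def absorbed_value_def lure_reward_def of_nat_diff)
qed

lemma lure_greedy_takes_bait:
  assumes "A \<ge> 2" and "i \<in> {1..T-1}" and "0 \<in> S"
    and "greedy A T S (Qiter A T lure_next (lure_reward T) i) pol"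
  shows "pol 1 0 = 0"
proof (rule ccontr)
  let ?Q = "Qiter A T lure_next (lure_reward T) i 1 0"
  assume "pol 1 0 \<noteq> 0"
  have "?Q 0 \<le> ?Q (pol 1 0)"
    using assms by (auto simp: greedy_def)
  moreover have "?Q 0 = real T - 5/4"
    using assms(1,2) by (intro lure_Qiter_bait) auto
  moreover have "?Q (pol 1 0) = real i - 1 + real (T - i) / real A"
    using assms(1,2) \<open>pol 1 0 \<noteq> 0\<close> by (intro lure_Qiter_escape) auto
  moreover have "real (T - i) / real A \<le> real (T - i) / 2"
    using assms(1) by (intro divide_left_mono) auto
  moreover have "real (T - i) = real T - real i" and "real i + 1 \<le> real T"
    using assms(2) by auto
  ultimately show False by linarith
qed

lemma lure_Jval_bait:
  assumes "T \<ge> 1" and "A > 0" and "pol 1 0 = 0"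
  shows "Jval A T 0 lure_next (lure_reward T) (det_policy pol) = real T - 5/4"
proof -
  obtain k where T: "T = Suc k" using assms(1) by (cases T) auto
  have "Vrem A T lure_next (lure_reward T) (det_policy pol) k 1 = 0"
    by (rule Vrem_absorbing_zero_reward) (simp_all add: lure_next_def lure_reward_def)
  then show ?thesis
    using assms by (simp add: Jval_def T Vrem_det_policy_Suc del: Vrem.simps(2))
      (simp add: lure_next_def lure_reward_def)
qed

lemma lure_Jval_escape:
  assumes "T \<ge> 1" and "A \<ge> 2"
  shows "Jval A T 0 lure_next (lure_reward T) (det_policy (\<lambda>t s. if s = 0 then 1 else 0))
           = real T - 1"
proof -
  obtain k where T: "T = Suc k" using assms(1) by (cases T) auto
  have "Vrem A T lure_next (lure_reward T) (det_policy (\<lambda>t s. if s = 0 then 1 else 0)) k 2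
          = real k * lure_reward T 2 0"
    using assms(2) by (intro Vrem_det_policy_absorbing) (auto simp: lure_next_def)
  then show ?thesis
    using assms(2) by (simp add: Jval_def T Vrem_det_policy_Suc del: Vrem.simps(2))
      (simp add: lure_next_def lure_reward_def)
qed

theorem mainTheorem2:
  fixes T A :: nat
  assumes "T \<ge> 1" and "A \<ge> 2"
  shows "\<exists>(S::nat set) s1 f R. valid_mdp A S s1 f \<and>
           (\<forall>i\<in>{1..T-1}. \<forall>pol. greedy A T S (Qiter A T f R i) pol \<longrightarrow>
               \<not> optimal A T S s1 f R (det_policy pol))"
proof (intro exI conjI ballI allI impI)
  let ?escape = "\<lambda>t s :: nat. if s = 0 then 1 else 0 :: nat"
  show "valid_mdp A {0, 1, 2} 0 lure_next"
    by (auto simp: valid_mdp_def lure_next_def)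
  fix i pol
  assume "i \<in> {1..T-1}" and "greedy A T {0, 1, 2} (Qiter A T lure_next (lure_reward T) i) pol"
  then have "pol 1 0 = 0"
    using assms(2) by (intro lure_greedy_takes_bait) auto
  then have "Jval A T 0 lure_next (lure_reward T) (det_policy pol)
               < Jval A T 0 lure_next (lure_reward T) (det_policy ?escape)"
    using assms by (simp add: lure_Jval_bait lure_Jval_escape)
  moreover have "is_policy A T {0, 1, 2} (det_policy ?escape)"
    using assms(2) by (auto simp: is_policy_def det_policy_def)
  ultimately show "\<not> optimal A T {0, 1, 2} 0 lure_next (lure_reward T) (det_policy pol)"
    unfolding optimal_def by fastforce
qed

end
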